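(* Let $k\in\mathbb{Z}$ with $|k|\ge 2$ and $z\in\mathbb{C}\setminus\{0\}$. Then $$|W_k'(z)| \le \frac{1}{|z|}\frac{(2|k|-2)\pi}{(2|k|-2)\pi-1} \le \frac{1}{|z|}\frac{2\pi}{2\pi-1} \le \frac{1.2}{|z|}.$$ Also, if $k=1$ and $\operatorname{Im}(z)\ge 0$, or if $k=-1$ and $\operatorname{Im}(z)<0$, then $$|W_k'(z)| \le \frac{1}{|z|}\frac{\pi}{\pi-1}\le\frac{1.5}{|z|}.$$
   Context: $W_k$ denotes the $k$-th branch of the Lambert $W$ function (inverse of $w\mapsto we^w$) in the standard convention of Corless, Gonnet, Hare, Jeffrey and Knuth (1996); branches with $|k|\ge2$ have a branch cut on $(-\infty,0)$, $W_{\pm1}$ have cuts on $(-\infty,0)$ and, on one side, $(-1/e,0)$; on a branch cut the value is defined by continuity from the upper half plane. $W_k'$ denotes the derivative of the fixed branch $W_k$ (on a cut, the derivative of the branch continued from above, i.e. the directional derivative along the cut), and $W'(z)=\frac{1}{z}\frac{W(z)}{1+W(z)}$. *)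

theory Defs
  imports "HOL-Analysis.Analysis"
begin

text \<open>Branches of the Lambert W function (Corless--Gonnet--Hare--Jeffrey--Knuth convention,
values on branch cuts by continuity from the upper half plane).
Characterisation via the unwinding identity of Jeffrey--Hare--Corless:
  W_k(z) + Ln W_k(z) = Ln z + 2 pi i k   (Ln = principal log, Im Ln in (-pi, pi]),
which determines W_k(z) uniquely for z \<noteq> 0 except for z in [-1/e, 0) with k = 0
(two real solutions) and k = -1 (no solution; W_{-1} is real there).
These exceptional cases are the real branches: W_0 with W \<ge> -1 and W_{-1} with W \<le> -1.
The value at z = 0 for k \<noteq> 0 is irrelevant (undefined mathematically).\<close>

definition LambertW :: "int \<Rightarrow> complex \<Rightarrow> complex" where
  "LambertW k z =
     (if z = 0 then 0
      else if z \<in> complex_of_real ` {-exp(-1)..<0} \<and> k = 0 then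
        (THE w. w \<in> \<real> \<and> -1 \<le> Re w \<and> w * exp w = z)
      else if z \<in> complex_of_real ` {-exp(-1)..<0} \<and> k = -1 then
        (THE w. w \<in> \<real> \<and> Re w \<le> -1 \<and> w * exp w = z)
      else (THE w. w \<noteq> 0 \<and> w + Ln w = Ln z + 2 * pi * \<i> * of_int k))"

text \<open>D is the derivative W_k'(z) of the fixed branch W_k at z; on the real axis (where
the cuts lie) it is the derivative of the branch continued from above, i.e. the derivative
within the closed upper half plane.\<close>

definition has_LambertW_deriv :: "int \<Rightarrow> complex \<Rightarrow> complex \<Rightarrow> bool" where
  "has_LambertW_deriv k z D \<longleftrightarrow>
     (LambertW k has_field_derivative D) (at z within {w. Im z = 0 \<longrightarrow> 0 \<le> Im w})"

end

theory Submission
  imports Defs "HOL-Complex_Analysis.Conformal_Mappings"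
begin

text \<open>Away from the real branches, \<open>W\<^sub>k(z)\<close> is the solution \<open>w \<noteq> 0\<close> of
\<open>w + Ln w = c\<close> with \<open>c = Ln z + 2\<pi>ik\<close>. If \<open>s \<cdot> Im c > 1 + \<pi>\<close> for a sign \<open>s = \<plusminus>1\<close>,
every solution lies in the half plane \<open>s \<cdot> Im w \<ge> s \<cdot> Im c - \<pi>\<close>, where \<open>|Ln'| < 1\<close>, so
\<open>w \<mapsto> c - Ln w\<close> is a contraction of it: the solution exists and is unique, and the inverse
function theorem gives \<open>W\<^sub>k'(z) = W / (z (1 + W))\<close>. For \<open>|k| \<ge> 2\<close>, and for \<open>k = 1\<close> above
resp. \<open>k = -1\<close> below the real axis, the half plane lies at distance \<open>R = (2|k| - 2)\<pi>\<close>
resp. \<open>R = \<pi>\<close> from the origin, so \<open>|W| \<ge> R\<close> and \<open>|W / (1 + W)| \<le> R / (R - 1)\<close>.\<close>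

lemma unit_mult_le_abs:
  fixes s x :: real
  assumes "\<bar>s\<bar> = 1"
  shows "s * x \<le> \<bar>x\<bar>"
  by (metis assms abs_ge_self abs_mult mult_1)

lemma norm_Ln_diff_le_halfplane:
  fixes u v :: complex
  assumes s: "\<bar>s\<bar> = 1" and a: "0 < a" and u: "a \<le> s * Im u" and v: "a \<le> s * Im v"
  shows "cmod (Ln u - Ln v) \<le> cmod (u - v) / a"
proof -
  let ?H = "{w::complex. a \<le> s * Im w}"
  have "?H = {w. Complex 0 s \<bullet> w \<ge> a}"
    by (auto simp: inner_complex_def)
  then have "convex ?H"
    using convex_halfspace_ge by metis
  then have "cmod (Ln u - Ln v) \<le> inverse a * cmod (u - v)"
  proof (rule field_differentiable_bound[where f' = inverse])
    fix w assume "w \<in> ?H"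
    then have "a \<le> \<bar>Im w\<bar>"
      using unit_mult_le_abs[OF s, of "Im w"] by simp
    then have "w \<notin> \<real>\<^sub>\<le>\<^sub>0" and "a \<le> cmod w"
      using a abs_Im_le_cmod[of w] by (auto simp: complex_nonpos_Reals_iff)
    then show "(Ln has_field_derivative inverse w) (at w within ?H)"
      and "cmod (inverse w) \<le> inverse a"
      using a by (auto intro: has_field_derivative_at_within has_field_derivative_Ln
          simp: norm_inverse le_imp_inverse_le)
  qed (use u v in auto)
  then show ?thesis
    by (simp add: divide_inverse mult.commute)
qed

lemma unit_mult_Im_Ln_le:
  assumes "\<bar>s\<bar> = 1" "w \<noteq> 0"
  shows "s * Im (Ln w) \<le> pi"
  using unit_mult_le_abs[OF assms(1), of "Im (Ln w)"] mpi_less_Im_Ln[of w] Im_Ln_le_pi[of w] assms(2)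
  by linarith

lemma Im_plus_Ln_solution_ge:
  assumes s: "\<bar>s\<bar> = 1" and w: "w \<noteq> 0" "w + Ln w = c"
  shows "s * Im c - pi \<le> s * Im w"
proof -
  have "Im c = Im w + Im (Ln w)"
    using w by auto
  then show ?thesis
    using unit_mult_Im_Ln_le[OF s w(1)] by (simp add: algebra_simps)
qed

lemma plus_Ln_eq_ex1:
  assumes s: "\<bar>s\<bar> = 1" and c: "1 + pi < s * Im c"
  shows "\<exists>!w. w \<noteq> 0 \<and> w + Ln w = c"
proof -
  define a where "a = s * Im c - pi"
  let ?H = "{w::complex. a \<le> s * Im w}"
  have a: "1 < a"
    using c by (simp add: a_def)
  have H_nonzero: "w \<noteq> 0" if "w \<in> ?H" for w
    using that a by auto
  have "complete ?H"
    by (intro complete_eq_closed[THEN iffD2] closed_Collect_le continuous_intros)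
  moreover have "s * s = 1"
    by (metis abs_mult_self_eq mult_1 s)
  then have "\<i> * of_real (a * s) \<in> ?H"
    by (simp add: mult.left_commute[of s a])
  then have "?H \<noteq> {}"
    by blast
  moreover have "(\<lambda>w. c - Ln w) ` ?H \<subseteq> ?H"
  proof (rule image_subsetI)
    fix w assume "w \<in> ?H"
    then show "c - Ln w \<in> ?H"
      using unit_mult_Im_Ln_le[OF s H_nonzero[OF \<open>w \<in> ?H\<close>]]
      by (simp add: a_def right_diff_distrib)
  qed
  moreover have "dist (c - Ln u) (c - Ln v) \<le> inverse a * dist u v"
    if "u \<in> ?H" "v \<in> ?H" for u v
    using norm_Ln_diff_le_halfplane[OF s _ that[simplified]] a
    by (simp add: dist_norm norm_minus_commute divide_inverse mult.commute)
  ultimately have "\<exists>!w\<in>?H. c - Ln w = w"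
    using a by (intro Banach_fix[where c = "inverse a"]) (auto simp: inverse_less_1_iff)
  then obtain w where w: "w \<in> ?H" "c - Ln w = w"
    and unique: "\<And>v. v \<in> ?H \<Longrightarrow> c - Ln v = v \<Longrightarrow> v = w"
    by blast
  have solution_in_H: "v \<in> ?H" if "v \<noteq> 0" "v + Ln v = c" for v
    using Im_plus_Ln_solution_ge[OF s that] by (simp add: a_def)
  show ?thesis
  proof (rule ex1I[of _ w])
    show "w \<noteq> 0 \<and> w + Ln w = c"
      using w H_nonzero by (auto simp: algebra_simps)
  next
    fix v assume "v \<noteq> 0 \<and> v + Ln v = c"
    then show "v = w"
      using unique solution_in_H by (auto simp: algebra_simps)
  qed
qed

definition plus_Ln_inv :: "complex \<Rightarrow> complex" where
  "plus_Ln_inv c = (THE w. w \<noteq> 0 \<and> w + Ln w = c)"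

lemma plus_Ln_inv:
  assumes "\<bar>s\<bar> = 1" "1 + pi < s * Im c"
  shows "plus_Ln_inv c \<noteq> 0" "plus_Ln_inv c + Ln (plus_Ln_inv c) = c"
  using theI'[OF plus_Ln_eq_ex1[OF assms]] unfolding plus_Ln_inv_def by auto

lemma plus_Ln_inv_eqI:
  assumes "\<bar>s\<bar> = 1" "1 + pi < s * Im c" "w \<noteq> 0" "w + Ln w = c"
  shows "plus_Ln_inv c = w"
  using the1_equality[OF plus_Ln_eq_ex1[OF assms(1,2)]] assms(3,4)
  unfolding plus_Ln_inv_def by blast

lemma has_field_derivative_plus_Ln_inv:
  assumes s: "\<bar>s\<bar> = 1" and c: "1 + pi < s * Im c"
  defines "W \<equiv> plus_Ln_inv c"
  shows "(plus_Ln_inv has_field_derivative W / (1 + W)) (at c)"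
proof -
  let ?f = "\<lambda>w. w + Ln w"
  let ?H = "{w::complex. 1 < s * Im w}"
  \<comment> \<open>\<open>plus_Ln_inv\<close> is a left inverse of \<open>?f\<close> wherever \<open>?f\<close> lands in the uniqueness region\<close>
  let ?S = "?f -` {c. 1 + pi < s * Im c} \<inter> ?H"
  have off_axis: "Im w \<noteq> 0" if "w \<in> ?H" for w
    using that by auto
  have cont: "continuous_on ?H ?f"
    using off_axis by (auto intro!: continuous_intros simp: complex_nonpos_Reals_iff)
  moreover have "open ?H" "open {c::complex. 1 + pi < s * Im c}"
    by (auto intro!: open_Collect_less continuous_intros)
  ultimately have "open ?S"
    using continuous_on_open_vimage by blast
  have W: "W \<noteq> 0" "?f W = c"
    using plus_Ln_inv[OF s c] by (auto simp: W_def)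
  then have "W \<in> ?S"
    using Im_plus_Ln_solution_ge[OF s W] c by auto
  then have "Im W \<noteq> 0"
    using off_axis by blast
  then have deriv: "(?f has_field_derivative 1 + inverse W) (at W)"
    by (auto intro!: derivative_eq_intros simp: complex_nonpos_Reals_iff)
  have "1 + W \<noteq> 0"
    using \<open>Im W \<noteq> 0\<close> by (auto simp: complex_eq_iff)
  then have "1 + inverse W \<noteq> 0" and inverse_eq: "inverse (1 + inverse W) = W / (1 + W)"
    using W(1) by (simp_all add: field_simps)
  have "(plus_Ln_inv has_field_derivative inverse (1 + inverse W)) (at c)"
  proof (rule has_field_derivative_inverse_strong_x[where S = ?S])
    show "plus_Ln_inv (?f w) = w" if "w \<in> ?S" for w
      using that off_axis by (intro plus_Ln_inv_eqI[OF s]) auto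
    show "continuous_on ?S ?f"
      using cont by (rule continuous_on_subset) blast
  qed (use deriv \<open>1 + inverse W \<noteq> 0\<close> \<open>open ?S\<close> \<open>W \<in> ?S\<close> W(2) in \<open>simp_all add: W_def\<close>)
  then show ?thesis
    by (simp only: inverse_eq)
qed

lemma has_field_derivative_Ln_within_upper:
  assumes z: "z \<noteq> 0"
  shows "(Ln has_field_derivative inverse z) (at z within {w. 0 \<le> Im w})"
proof (cases "z \<in> \<real>\<^sub>\<le>\<^sub>0")
  case False
  then show ?thesis
    using has_field_derivative_Ln has_field_derivative_at_within by blast
next
  case True
  \<comment> \<open>on the closed upper half plane \<open>Ln\<close> agrees with \<open>Ln (-\<i> w) + \<i>\<pi>/2\<close>, which is
    holomorphic across the negative real axis\<close>
  then have "Im z = 0" "- \<i> * z \<notin> \<real>\<^sub>\<le>\<^sub>0"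
    using z by (auto simp: complex_nonpos_Reals_iff complex_eq_iff)
  then have "((\<lambda>w. Ln (- \<i> * w) + \<i> * pi / 2) has_field_derivative
      inverse (- \<i> * z) * - \<i>) (at z)"
    by (auto intro!: derivative_eq_intros)
  moreover have "inverse (- \<i> * z) * - \<i> = inverse z"
    using z by (simp add: field_simps)
  ultimately have "((\<lambda>w. Ln (- \<i> * w) + \<i> * pi / 2) has_field_derivative inverse z)
      (at z within {w. 0 \<le> Im w})"
    by (auto intro: has_field_derivative_at_within)
  then show ?thesis
  proof (rule has_field_derivative_transform_within[where d = "cmod z"])
    fix w assume "w \<in> {w. 0 \<le> Im w}" "dist w z < cmod z"
    then have "0 \<le> Re (- \<i> * w)" "w \<noteq> 0"
      by auto
    then show "Ln (- \<i> * w) + \<i> * pi / 2 = Ln w"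
      using Ln_times_ii[of "- \<i> * w"] by simp
  qed (use z \<open>Im z = 0\<close> in auto)
qed

lemma LambertW_eq_plus_Ln_inv:
  assumes "z \<noteq> 0" "k \<noteq> 0" "k = -1 \<Longrightarrow> Im z \<noteq> 0"
  shows "LambertW k z = plus_Ln_inv (Ln z + 2 * pi * \<i> * of_int k)"
  using assms unfolding LambertW_def plus_Ln_inv_def by auto

lemma LambertW_eq_plus_Ln_inv_near:
  assumes z: "z \<noteq> 0" and k: "k \<noteq> 0" "k = -1 \<Longrightarrow> Im z \<noteq> 0"
  obtains d where "0 < d"
    "\<And>w. dist w z < d \<Longrightarrow> LambertW k w = plus_Ln_inv (Ln w + 2 * pi * \<i> * of_int k)"
proof
  define d where "d = (if k = -1 then \<bar>Im z\<bar> else cmod z)"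
  show "0 < d"
    using z k by (auto simp: d_def)
  fix w assume "dist w z < d"
  then have close: "\<bar>Im w - Im z\<bar> < d" "cmod (w - z) < d"
    using abs_Im_le_cmod[of "w - z"] by (auto simp: dist_norm)
  have "w \<noteq> 0"
    using close(2) abs_Im_le_cmod[of z] by (auto simp: d_def split: if_splits)
  moreover have "Im w \<noteq> 0" if "k = -1"
    using close(1) that by (auto simp: d_def)
  ultimately show "LambertW k w = plus_Ln_inv (Ln w + 2 * pi * \<i> * of_int k)"
    using LambertW_eq_plus_Ln_inv[OF _ k(1)] by simp
qed

lemma has_field_derivative_Ln_from_above:
  assumes z: "z \<noteq> 0"
  shows "(Ln has_field_derivative inverse z) (at z within {w. Im z = 0 \<longrightarrow> 0 \<le> Im w})"
proof (cases "Im z = 0")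
  case True
  then show ?thesis
    using has_field_derivative_Ln_within_upper[OF z] by simp
next
  case False
  then have "z \<notin> \<real>\<^sub>\<le>\<^sub>0"
    by (auto simp: complex_nonpos_Reals_iff)
  then show ?thesis
    using has_field_derivative_Ln has_field_derivative_at_within by blast
qed

lemma has_LambertW_deriv_plus_Ln_inv:
  assumes z: "z \<noteq> 0" and k: "k \<noteq> 0" "k = -1 \<Longrightarrow> Im z \<noteq> 0"
    and s: "\<bar>s\<bar> = 1" and c: "1 + pi < s * Im (Ln z + 2 * pi * \<i> * of_int k)"
  defines "W \<equiv> LambertW k z"
  shows "has_LambertW_deriv k z (W / (z * (1 + W)))"
proof -
  let ?c = "\<lambda>w. Ln w + 2 * pi * \<i> * of_int k"
  let ?T = "{w. Im z = 0 \<longrightarrow> 0 \<le> Im w}"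
  from DERIV_add[OF has_field_derivative_Ln_from_above[OF z] DERIV_const[of "2 * pi * \<i> * of_int k"]]
  have "(?c has_field_derivative inverse z) (at z within ?T)"
    by simp
  from DERIV_chain[OF has_field_derivative_plus_Ln_inv[OF s c] this]
  have deriv: "(plus_Ln_inv \<circ> ?c has_field_derivative W / (1 + W) * inverse z) (at z within ?T)"
    by (simp add: W_def LambertW_eq_plus_Ln_inv[OF z k])
  obtain d where "0 < d" and near: "\<And>w. dist w z < d \<Longrightarrow> LambertW k w = plus_Ln_inv (?c w)"
    using LambertW_eq_plus_Ln_inv_near[OF z k] by blast
  have "(LambertW k has_field_derivative W / (1 + W) * inverse z) (at z within ?T)"
    using deriv \<open>0 < d\<close> by (rule has_field_derivative_transform_within) (auto simp: near)
  moreover have "W / (1 + W) * inverse z = W / (z * (1 + W))"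
    by (simp add: divide_inverse inverse_mult_distrib mult_ac)
  ultimately show ?thesis
    unfolding has_LambertW_deriv_def by simp
qed

lemma norm_divide_one_plus_le:
  fixes W :: complex
  assumes R: "1 < R" "R \<le> cmod W"
  shows "cmod (W / (1 + W)) \<le> R / (R - 1)"
proof -
  have "cmod W - 1 \<le> cmod (1 + W)"
    by (metis add.commute norm_diff_ineq norm_one)
  moreover have "0 < cmod W - 1"
    using R by linarith
  ultimately have "cmod (W / (1 + W)) \<le> cmod W / (cmod W - 1)"
    unfolding norm_divide by (intro divide_left_mono mult_pos_pos) auto
  also have "\<dots> \<le> R / (R - 1)"
    using R by (simp add: field_simps)
  finally show ?thesis .
qed

lemma divide_diff_one_antimono:
  fixes R R' :: real
  assumes "1 < R" "R \<le> R'"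
  shows "R' / (R' - 1) \<le> R / (R - 1)"
  using assms by (simp add: field_simps)

lemma LambertW_deriv_bound:
  assumes z: "z \<noteq> 0" and k: "k \<noteq> 0" "k = -1 \<Longrightarrow> Im z \<noteq> 0" and s: "\<bar>s\<bar> = 1"
    and R: "1 < R" "R + pi \<le> s * Im (Ln z + 2 * pi * \<i> * of_int k)"
  shows "\<exists>D. has_LambertW_deriv k z D \<and> cmod D \<le> (1 / cmod z) * (R / (R - 1))"
proof -
  let ?c = "Ln z + 2 * pi * \<i> * of_int k"
  let ?W = "LambertW k z"
  have c: "1 + pi < s * Im ?c"
    using R by linarith
  have W: "?W \<noteq> 0" "?W + Ln ?W = ?c"
    using plus_Ln_inv[OF s c] LambertW_eq_plus_Ln_inv[OF z k] by simp_all
  have "R \<le> s * Im ?W"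
    using Im_plus_Ln_solution_ge[OF s W] R by linarith
  also have "\<dots> \<le> cmod ?W"
    using unit_mult_le_abs[OF s] abs_Im_le_cmod order_trans by blast
  finally have "cmod (?W / (1 + ?W)) \<le> R / (R - 1)"
    using norm_divide_one_plus_le R(1) by blast
  then have "(1 / cmod z) * cmod (?W / (1 + ?W)) \<le> (1 / cmod z) * (R / (R - 1))"
    by (rule mult_left_mono) simp
  moreover have "cmod (?W / (z * (1 + ?W))) = (1 / cmod z) * cmod (?W / (1 + ?W))"
    by (simp add: norm_divide norm_mult)
  moreover have "has_LambertW_deriv k z (?W / (z * (1 + ?W)))"
    by (rule has_LambertW_deriv_plus_Ln_inv[OF z k s c])
  ultimately show ?thesis
    by auto
qed

lemma LambertW_deriv_bound_far_branch:
  assumes z: "z \<noteq> 0" and k: "\<bar>k\<bar> \<ge> 2"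
  defines "R \<equiv> real_of_int (2 * \<bar>k\<bar> - 2) * pi"
  shows "\<exists>D. has_LambertW_deriv k z D \<and> cmod D \<le> (1 / cmod z) * (R / (R - 1))"
proof (rule LambertW_deriv_bound[OF z])
  show s: "\<bar>real_of_int (sgn k)\<bar> = 1" "k \<noteq> 0" "k = -1 \<Longrightarrow> Im z \<noteq> 0"
    using k by (auto simp: sgn_if)
  have "2 * pi \<le> R"
    using k by (simp add: R_def)
  then show "1 < R"
    using pi_gt3 by linarith
  have "sgn k * k = \<bar>k\<bar>"
    by (simp add: abs_sgn mult.commute)
  then have "sgn k * Im (Ln z + 2 * pi * \<i> * of_int k) = sgn k * Im (Ln z) + 2 * pi * \<bar>k\<bar>"
    by (simp add: algebra_simps flip: of_int_mult)
  moreover have "- sgn k * Im (Ln z) \<le> pi"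
    using unit_mult_Im_Ln_le[of "- sgn k" z] z s by simp
  moreover have "R = 2 * pi * \<bar>k\<bar> - 2 * pi"
    by (simp add: R_def algebra_simps)
  ultimately show "R + pi \<le> sgn k * Im (Ln z + 2 * pi * \<i> * of_int k)"
    by linarith
qed

lemma LambertW_deriv_bound_near_branch:
  assumes z: "z \<noteq> 0" and k: "(k = 1 \<and> Im z \<ge> 0) \<or> (k = -1 \<and> Im z < 0)"
  shows "\<exists>D. has_LambertW_deriv k z D \<and> cmod D \<le> (1 / cmod z) * (pi / (pi - 1))"
proof (rule LambertW_deriv_bound[OF z])
  have "0 \<le> k * Im (Ln z)"
  proof (cases "k = 1")
    case True
    then show ?thesis
      using k Im_Ln_pos_le[OF z] by simp
  next
    case False
    then have "k = -1" "Im z < 0"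
      using k by auto
    then show ?thesis
      using Im_Ln_pos_le[OF z] Im_Ln_le_pi[OF z] by auto
  qed
  then show "pi + pi \<le> k * Im (Ln z + 2 * pi * \<i> * of_int k)"
    using k by (auto simp: algebra_simps)
qed (use k pi_gt3 in auto)

theorem theorem3:
  fixes k :: int and z :: complex
  assumes "z \<noteq> 0"
  shows "(\<bar>k\<bar> \<ge> 2 \<longrightarrow>
            (\<exists>D. has_LambertW_deriv k z D \<and>
               cmod D \<le> (1 / cmod z) * ((2 * \<bar>k\<bar> - 2) * pi / ((2 * \<bar>k\<bar> - 2) * pi - 1)) \<and>
               (1 / cmod z) * ((2 * \<bar>k\<bar> - 2) * pi / ((2 * \<bar>k\<bar> - 2) * pi - 1))
                 \<le> (1 / cmod z) * (2 * pi / (2 * pi - 1)) \<and>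
               (1 / cmod z) * (2 * pi / (2 * pi - 1)) \<le> 1.2 / cmod z))
       \<and> ((k = 1 \<and> Im z \<ge> 0) \<or> (k = -1 \<and> Im z < 0) \<longrightarrow>
            (\<exists>D. has_LambertW_deriv k z D \<and>
               cmod D \<le> (1 / cmod z) * (pi / (pi - 1)) \<and>
               (1 / cmod z) * (pi / (pi - 1)) \<le> 1.5 / cmod z))"
proof -
  have scale: "(1 / cmod z) * a \<le> (1 / cmod z) * b" if "a \<le> b" for a b
    using that by (rule mult_left_mono) simp
  have "(2 * \<bar>k\<bar> - 2) * pi / ((2 * \<bar>k\<bar> - 2) * pi - 1) \<le> 2 * pi / (2 * pi - 1)"
    if "\<bar>k\<bar> \<ge> 2"
    using that pi_gt3 by (intro divide_diff_one_antimono) auto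
  moreover have "2 * pi / (2 * pi - 1) \<le> 1.2" "pi / (pi - 1) \<le> 1.5"
    using pi_gt3 by (simp_all add: field_simps)
  moreover have "1.2 / cmod z = (1 / cmod z) * 1.2" "1.5 / cmod z = (1 / cmod z) * 1.5"
    by simp_all
  ultimately show ?thesis
    using LambertW_deriv_bound_far_branch[OF assms] LambertW_deriv_bound_near_branch[OF assms] scale
    by (metis (no_types, lifting))
qed

end
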